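(* Under the assumptions of the explicit-formulae proposition (piecewise linear concave non-positive increasing $v$ on grid $x_1<\dots<x_N$, $-\infty$ below $x_1$ and constant above $x_N$; $u$ concave increasing with $u^\dagger$ continuous on $(0,\infty)$ and $\lim_{p\to0}u^\dagger(p)=\infty$; $s\in(0,1)$), $\lim_{\eta\to\infty}\gamma^\eta=\gamma_{\min}$.
   Context: $\gamma_{\min}=\inf\{x:u(x)>-\infty\}$. $\Phi$ is the standard normal distribution function, $M=|\mu-r|\sqrt{\delta t}/\sigma$, $Q(x)=\Phi(M+\Phi^{-1}(x))$, $q^A_{BS}=Q'$. For concave increasing $g$, $g^\dagger(p)=\inf\{x:p\in\partial g(x)\}$, $\partial g$ the superdifferential. $C\in\{0,1\}$. For $\eta>0$: $f^\eta(x)=v^\dagger(\eta s^{C-1}e^{-r\delta t}q^A_{BS}(x))$, $\gamma^\eta=u^\dagger\big(-\frac{\eta}{\delta t}\big(-1+s\int_0^1(1+v(f^\eta(x)))\mathrm dx\big)^{-1}\big)$. *)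

theory Defs
  imports "HOL-Probability.Probability"
begin

definition Phi :: "real \<Rightarrow> real" where
  "Phi x = (LBINT t:{..x}. std_normal_density t)"

definition Phi_inv :: "real \<Rightarrow> real" where
  "Phi_inv p = (THE x. Phi x = p)"

definition M_param :: "real \<Rightarrow> real \<Rightarrow> real \<Rightarrow> real \<Rightarrow> real" where
  "M_param \<mu> r \<sigma> \<delta>t = \<bar>\<mu> - r\<bar> * sqrt \<delta>t / \<sigma>"

definition Q_fun :: "real \<Rightarrow> real \<Rightarrow> real" where
  "Q_fun M x = Phi (M + Phi_inv x)"

definition qBS :: "real \<Rightarrow> real \<Rightarrow> real" where
  "qBS M x = deriv (Q_fun M) x"

definition concave_ereal :: "(real \<Rightarrow> ereal) \<Rightarrow> bool" where
  "concave_ereal g \<longleftrightarrow> (\<forall>x y t. 0 < t \<and> t < 1 \<longrightarrow>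
      ereal t * g x + ereal (1 - t) * g y \<le> g (t * x + (1 - t) * y))"

definition superdiff :: "(real \<Rightarrow> ereal) \<Rightarrow> real \<Rightarrow> real set" where
  "superdiff g x = {p. \<bar>g x\<bar> \<noteq> \<infinity> \<and> (\<forall>y. g y \<le> g x + ereal (p * (y - x)))}"

definition dagger :: "(real \<Rightarrow> ereal) \<Rightarrow> real \<Rightarrow> ereal" where
  "dagger g p = Inf (ereal ` {x. p \<in> superdiff g x})"

definition gamma_min :: "(real \<Rightarrow> ereal) \<Rightarrow> ereal" where
  "gamma_min u = Inf (ereal ` {x. u x > -\<infinity>})"

definition f_eta :: "(real \<Rightarrow> ereal) \<Rightarrow> real \<Rightarrow> real \<Rightarrow> real \<Rightarrow> real \<Rightarrow> real \<Rightarrow> real \<Rightarrow> real \<Rightarrow> real \<Rightarrow> real" where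
  "f_eta v \<mu> r \<sigma> \<delta>t s C \<eta> x =
     real_of_ereal (dagger v (\<eta> * s powr (C - 1) * exp (- r * \<delta>t) * qBS (M_param \<mu> r \<sigma> \<delta>t) x))"

definition gamma_eta :: "(real \<Rightarrow> ereal) \<Rightarrow> (real \<Rightarrow> ereal) \<Rightarrow> real \<Rightarrow> real \<Rightarrow> real \<Rightarrow> real \<Rightarrow> real \<Rightarrow> real \<Rightarrow> real \<Rightarrow> ereal" where
  "gamma_eta u v \<mu> r \<sigma> \<delta>t s C \<eta> =
     dagger u (- (\<eta> / \<delta>t) * inverse (-1 + s * integral {0..1}
        (\<lambda>x. 1 + real_of_ereal (v (f_eta v \<mu> r \<sigma> \<delta>t s C \<eta> x)))))"

end

theory Submission imports Defs begin

text \<open>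
  The integral in \<open>\<gamma>\<^sup>\<eta>\<close> is trapped in a fixed bounded interval, because its integrand
  \<open>1 + v(f\<^sup>\<eta>(x))\<close> lies between \<open>1 + v(x\<^sub>1)\<close> and \<open>1\<close>. Hence the argument of
  \<open>u\<^sup>\<dagger>\<close> grows at least linearly in \<open>\<eta>\<close>, and it remains to see that
  \<open>u\<^sup>\<dagger>(p) \<rightarrow> \<gamma>\<^sub>m\<^sub>i\<^sub>n\<close> as \<open>p \<rightarrow> \<infinity>\<close>: a point \<open>x\<close> where \<open>u\<close> has supergradient \<open>p\<close>
  lies in the domain of \<open>u\<close>, and cannot stay to the right of some \<open>y < c\<close> in the domain,
  since the supergradient inequality at \<open>x\<close> would force \<open>u(y) \<rightarrow> -\<infinity>\<close>.
\<close>

lemma superdiff_finite: "p \<in> superdiff u x \<Longrightarrow> u x = ereal (real_of_ereal (u x))"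
  unfolding superdiff_def by (cases "u x") auto

lemma superdiff_le: "p \<in> superdiff u x \<Longrightarrow> u y \<le> u x + ereal (p * (y - x))"
  unfolding superdiff_def by auto

lemma superdiff_nonempty_if_dagger_finite:
  assumes "\<bar>dagger u p\<bar> \<noteq> \<infinity>" shows "\<exists>x. p \<in> superdiff u x"
proof (rule ccontr)
  assume "\<not> ?thesis"
  then have "{x. p \<in> superdiff u x} = {}" by auto
  with assms show False unfolding dagger_def by (simp add: top_ereal_def)
qed

lemma dagger_le: "p \<in> superdiff u x \<Longrightarrow> dagger u p \<le> ereal x"
  unfolding dagger_def by (auto intro: Inf_lower)

lemma gamma_min_le_dagger: "gamma_min u \<le> dagger u p"
  unfolding dagger_def gamma_min_def
proof (intro Inf_superset_mono image_mono subsetI)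
  fix x assume "x \<in> {x. p \<in> superdiff u x}"
  then show "x \<in> {x. - \<infinity> < u x}"
    using superdiff_finite by (metis MInfty_neq_ereal(1) ereal_infty_less(2) mem_Collect_eq)
qed

text \<open>The threshold for \<open>p\<close> comes from combining the supergradient inequalities at \<open>x\<close>
  (slope \<open>p\<close>) and at \<open>z\<close> (slope \<open>1\<close>).\<close>
lemma superdiff_point_less:
  assumes x: "p \<in> superdiff u x" and z: "1 \<in> superdiff u z"
    and y: "u y > -\<infinity>" "y < c"
    and p: "1 + (real_of_ereal (u z) - z + y - real_of_ereal (u y)) / (c - y) < p"
  shows "x < c"
proof (rule ccontr)
  assume "\<not> x < c"
  obtain a where ux: "u x = ereal a" using superdiff_finite[OF x] by blast
  obtain b where uz: "u z = ereal b" using superdiff_finite[OF z] by blast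
  have "u y \<le> ereal (b + (y - z))" using superdiff_le[OF z, of y] uz by simp
  moreover from this y(1) obtain w where uy: "u y = ereal w" by (cases "u y") auto
  ultimately have at_z: "w \<le> b + (y - z)" by simp
  have at_x: "w \<le> a + p * (y - x)" using superdiff_le[OF x, of y] ux uy by simp
  have "a \<le> b + (x - z)" using superdiff_le[OF z, of x] ux uz by simp
  with at_x have key: "(p - 1) * (x - y) \<le> b - z + y - w" by (simp add: algebra_simps)
  have "0 \<le> (b - z + y - w) / (c - y)" using at_z y(2) by simp
  with p uz uy have "p > 1" by simp
  then have "(p - 1) * (c - y) \<le> (p - 1) * (x - y)" using \<open>\<not> x < c\<close> by (intro mult_left_mono) auto
  with key have "p - 1 \<le> (b - z + y - w) / (c - y)"
    using y(2) by (simp add: pos_le_divide_eq)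
  with p uz uy show False by simp
qed

lemma dagger_tendsto_gamma_min:
  assumes superdiff_nonempty: "\<And>p. p \<ge> 1 \<Longrightarrow> \<exists>x. p \<in> superdiff u x"
  shows "(dagger u \<longlongrightarrow> gamma_min u) at_top"
proof (rule order_tendstoI)
  fix a assume "a < gamma_min u"
  then show "eventually (\<lambda>p. a < dagger u p) at_top"
    using gamma_min_le_dagger by (blast intro: always_eventually less_le_trans)
next
  fix c assume c: "gamma_min u < c"
  obtain z where z: "1 \<in> superdiff u z" using superdiff_nonempty by blast
  show "eventually (\<lambda>p. dagger u p < c) at_top"
  proof (cases c)
    case PInf
    have "dagger u p < \<infinity>" if p: "p \<ge> 1" for p
    proof -
      obtain x where "p \<in> superdiff u x" using superdiff_nonempty[OF p] by blast
      then have "dagger u p \<le> ereal x" by (rule dagger_le)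
      then show ?thesis by (cases "dagger u p") auto
    qed
    then show ?thesis unfolding PInf by (rule eventually_at_top_linorderI)
  next
    case MInf
    with c show ?thesis by simp
  next
    case (real c')
    with c obtain y where y: "u y > -\<infinity>" "y < c'"
      by (auto simp: gamma_min_def Inf_less_iff)
    define K where "K = 1 + (real_of_ereal (u z) - z + y - real_of_ereal (u y)) / (c' - y)"
    have "dagger u p < c" if p: "p \<ge> max 1 (K + 1)" for p
    proof -
      obtain x where x: "p \<in> superdiff u x" using superdiff_nonempty p by auto
      have "x < c'" using superdiff_point_less[OF x z y] p K_def by simp
      then show ?thesis using dagger_le[OF x] real by (simp add: le_less_trans)
    qed
    then show ?thesis by (rule eventually_at_top_linorderI)
  qed
qed

lemma real_of_ereal_mono_bounds:
  fixes v :: "real \<Rightarrow> ereal"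
  assumes below: "\<And>x. x < a \<Longrightarrow> v x = -\<infinity>" and fin: "v a \<noteq> -\<infinity>"
    and nonpos: "\<And>x. v x \<le> 0" and "mono v"
  shows "real_of_ereal (v a) \<le> real_of_ereal (v w)" "real_of_ereal (v w) \<le> 0"
proof -
  have va: "\<bar>v a\<bar> \<noteq> \<infinity>" using fin nonpos[of a] by (cases "v a") auto
  show "real_of_ereal (v w) \<le> 0" using nonpos[of w] by (simp add: real_of_ereal_le_0)
  show "real_of_ereal (v a) \<le> real_of_ereal (v w)"
  proof (cases "v w = -\<infinity>")
    case True then show ?thesis using va nonpos[of a] by (cases "v a") auto
  next
    case False
    then have "a \<le> w" using below by force
    then have "v a \<le> v w" using \<open>mono v\<close> by (auto dest: monoD)
    then show ?thesis using va nonpos[of w] by (cases "v a"; cases "v w") auto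
  qed
qed

text \<open>The lower bound is \<open>min 0 lo\<close> because a non-integrable \<open>g\<close> has integral \<open>0\<close>.\<close>
lemma integral_unit_interval_bounds:
  fixes g :: "real \<Rightarrow> real"
  assumes "\<And>x. lo \<le> g x" "\<And>x. g x \<le> 1"
  shows "min 0 lo \<le> integral {0..1} g" "integral {0..1} g \<le> 1"
proof -
  have "lo \<le> integral {0..1} g \<and> integral {0..1} g \<le> 1" if "g integrable_on {0..1}"
    using integral_le[of "\<lambda>_. lo" "{0..1}" g] integral_le[of g "{0..1}" "\<lambda>_. 1"] that assms
    by auto
  then show "min 0 lo \<le> integral {0..1} g" "integral {0..1} g \<le> 1"
    by (cases "g integrable_on {0..1}"; force simp: not_integrable_integral)+
qed

lemma filterlim_divide_bounded_at_top:
  fixes d :: "real \<Rightarrow> real"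
  assumes "c > 0" and "\<And>\<eta>. 0 < d \<eta>" and "\<And>\<eta>. d \<eta> \<le> K"
  shows "filterlim (\<lambda>\<eta>. \<eta> / (c * d \<eta>)) at_top at_top"
proof (rule filterlim_at_top_mono)
  have "K > 0" using less_le_trans[OF assms(2,3)] .
  then show "LIM \<eta> at_top. \<eta> / (c * K) :> at_top"
    using \<open>c > 0\<close> unfolding divide_inverse
    by (intro filterlim_at_top_mult_tendsto_pos[OF tendsto_const] filterlim_ident) auto
  have "\<eta> / (c * K) \<le> \<eta> / (c * d \<eta>)" if "\<eta> \<ge> 0" for \<eta>
    using that assms \<open>K > 0\<close> by (intro divide_left_mono mult_left_mono mult_pos_pos) auto
  then show "\<forall>\<^sub>F \<eta> in at_top. \<eta> / (c * K) \<le> \<eta> / (c * d \<eta>)"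
    by (rule eventually_at_top_linorderI)
qed

theorem mainTheorem10:
  fixes u v :: "real \<Rightarrow> ereal" and xs :: "nat \<Rightarrow> real" and N :: nat
    and \<mu> r \<sigma> \<delta>t s C :: real
  assumes N: "N \<ge> 1"
    and grid: "\<And>i. 1 \<le> i \<Longrightarrow> i < N \<Longrightarrow> xs i < xs (i + 1)"
    and v_below: "\<And>x. x < xs 1 \<Longrightarrow> v x = -\<infinity>"
    and v_fin: "\<And>x. xs 1 \<le> x \<Longrightarrow> v x \<noteq> -\<infinity>"
    and v_nonpos: "\<And>x. v x \<le> 0"
    and v_above: "\<And>x. xs N \<le> x \<Longrightarrow> v x = v (xs N)"
    and v_lin: "\<And>i x. 1 \<le> i \<Longrightarrow> i < N \<Longrightarrow> xs i \<le> x \<Longrightarrow> x \<le> xs (i + 1) \<Longrightarrow>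
        v x = v (xs i) + ereal ((x - xs i) / (xs (i + 1) - xs i)) * (v (xs (i + 1)) - v (xs i))"
    and v_conc: "concave_ereal v"
    and v_mono: "mono v"
    and u_conc: "concave_ereal u"
    and u_mono: "mono u"
    and u_lt: "\<And>x. u x < \<infinity>"
    and u_dag_fin: "\<And>p. p > 0 \<Longrightarrow> \<bar>dagger u p\<bar> \<noteq> \<infinity>"
    and u_dag_cont: "continuous_on {0<..} (dagger u)"
    and u_dag_lim: "(dagger u \<longlongrightarrow> \<infinity>) (at_right 0)"
    and s: "0 < s" "s < 1"
    and params: "\<sigma> > 0" "\<delta>t > 0"
    and C: "C \<in> {0, 1}"
  shows "((\<lambda>\<eta>. gamma_eta u v \<mu> r \<sigma> \<delta>t s C \<eta>) \<longlongrightarrow> gamma_min u) at_top"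
proof -
  define I where "I \<eta> = integral {0..1}
    (\<lambda>x. 1 + real_of_ereal (v (f_eta v \<mu> r \<sigma> \<delta>t s C \<eta> x)))" for \<eta>
  note v_bounds = real_of_ereal_mono_bounds[OF v_below v_fin[OF order_refl] v_nonpos v_mono]
  have integrand_bounds:
      "1 + real_of_ereal (v (xs 1)) \<le> 1 + real_of_ereal (v w)" "1 + real_of_ereal (v w) \<le> 1" for w
    using v_bounds[of w] by simp_all
  have I_bounds: "min 0 (1 + real_of_ereal (v (xs 1))) \<le> I \<eta>" "I \<eta> \<le> 1" for \<eta>
    unfolding I_def by (rule integral_unit_interval_bounds; rule integrand_bounds)+
  have "0 < 1 - s * I \<eta>" for \<eta>
    using I_bounds(2)[of \<eta>] s mult_left_le[of "I \<eta>" s] by linarith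
  moreover have "1 - s * I \<eta> \<le> 1 - s * min 0 (1 + real_of_ereal (v (xs 1)))" for \<eta>
    using I_bounds(1)[of \<eta>] s by (simp add: mult_left_mono)
  ultimately have arg_lim: "filterlim (\<lambda>\<eta>. \<eta> / (\<delta>t * (1 - s * I \<eta>))) at_top at_top"
    using params by (intro filterlim_divide_bounded_at_top)
  have dagger_lim: "(dagger u \<longlongrightarrow> gamma_min u) at_top"
    using u_dag_fin by (intro dagger_tendsto_gamma_min superdiff_nonempty_if_dagger_finite) auto
  have gamma_eq: "gamma_eta u v \<mu> r \<sigma> \<delta>t s C = (\<lambda>\<eta>. dagger u (\<eta> / (\<delta>t * (1 - s * I \<eta>))))"
  proof
    fix \<eta>
    have "-1 + s * I \<eta> = - (1 - s * I \<eta>)" by simp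
    then show "gamma_eta u v \<mu> r \<sigma> \<delta>t s C \<eta> = dagger u (\<eta> / (\<delta>t * (1 - s * I \<eta>)))"
      unfolding gamma_eta_def I_def[symmetric]
      by (simp only: inverse_minus_eq) (simp add: divide_inverse mult.assoc)
  qed
  show ?thesis unfolding gamma_eq by (rule filterlim_compose[OF dagger_lim arg_lim])
qed

end
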